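(* There is an absolute constant $C>0$ and an algorithm with the following property. Let $S$ be a set of arms with reward distributions supported on $[0,1]$ and means $\theta_1\ge\dots\ge\theta_{|S|}$ (indexing unknown to the algorithm), where $|S|/10$ and $(|S|+K)/2$ are integers, $1\le K\le\frac23|S|$, and let $\gamma,\delta\in(0,1/2]$, $\phi\in(0,1]$. If $\theta_K-\theta_{(|S|+K)/2}\ge\phi$, then the algorithm makes at most $C\frac{|S|}{\phi^2}(\log\frac1\gamma+\log\frac1\delta)$ pulls and with probability at least $1-\delta$ outputs a set $T\subseteq S$ with $|T|=|S|/10$ such that at most $\gamma K$ arms of $T$ belong to $\{1,\dots,K\}$ (the top-$K$ arms of $S$).
   Context: Stochastic bandit model: each pull yields an independent sample from the pulled arm's unknown distribution. *)

theory Defs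
  imports "HOL-Probability.Probability"
begin

text \<open>Stochastic bandit model, stack-of-rewards formulation: the j-th pull (counting from 0)
of arm a returns the sample omega (a, j); the samples omega (a, j) are independent, and
for each arm a they are i.i.d. with law D a.\<close>

datatype 'a action = Pull 'a | Stop "'a set"

type_synonym 'a policy = "('a \<times> real) list \<Rightarrow> 'a action"

fun run :: "'a policy \<Rightarrow> ('a \<times> nat \<Rightarrow> real) \<Rightarrow> nat \<Rightarrow> ('a \<times> real) list \<Rightarrow> 'a set option" where
  "run \<pi> \<omega> n h =
     (case \<pi> h of
        Stop T \<Rightarrow> Some T
      | Pull a \<Rightarrow> (if n = 0 then None
                 else run \<pi> \<omega> (n - 1) (h @ [(a, \<omega> (a, length (filter (\<lambda>p. fst p = a) h)))])))"

declare run.simps[simp del]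

definition reward_space :: "'a set \<Rightarrow> ('a \<Rightarrow> real measure) \<Rightarrow> ('a \<times> nat \<Rightarrow> real) measure" where
  "reward_space S D = PiM (S \<times> UNIV) (\<lambda>(a, j). D a)"

definition arm_mean :: "real measure \<Rightarrow> real" where
  "arm_mean M = (\<integral>x. x \<partial>M)"

definition valid_arms :: "'a set \<Rightarrow> ('a \<Rightarrow> real measure) \<Rightarrow> bool" where
  "valid_arms S D \<longleftrightarrow> finite S \<and>
     (\<forall>a\<in>S. prob_space (D a) \<and> sets (D a) = sets borel \<and> measure (D a) {0..1} = 1)"

definition sorted_indexing :: "'a set \<Rightarrow> ('a \<Rightarrow> real measure) \<Rightarrow> (nat \<Rightarrow> 'a) \<Rightarrow> bool" where
  "sorted_indexing S D \<sigma> \<longleftrightarrow> bij_betw \<sigma> {1..card S} S \<and>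
     (\<forall>i\<in>{1..card S}. \<forall>j\<in>{1..card S}. i \<le> j \<longrightarrow> arm_mean (D (\<sigma> j)) \<le> arm_mean (D (\<sigma> i)))"

text \<open>Randomized algorithm: given S, K, gamma, delta, phi, draws a deterministic policy
(internal randomness, independent of the rewards).\<close>
type_synonym 'a algorithm = "'a set \<Rightarrow> nat \<Rightarrow> real \<Rightarrow> real \<Rightarrow> real \<Rightarrow> 'a policy pmf"

end

theory Submission imports Defs begin

text \<open>The algorithm pulls every arm m times, with m of order \<open>log (1/(\<gamma>\<delta>)) / \<phi>\<^sup>2\<close>,
and outputs the tenth of the arms with the lowest reward sums. Put the threshold t halfway
between \<open>\<theta>\<^sub>K\<close> and \<open>\<theta>\<^sub>K - \<phi>\<close>. By Hoeffding's inequality each top-K arm has its sum below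
m t, and each arm of rank at least \<open>(|S| + K)/2\<close> has its sum above m t, with probability at most
\<open>\<gamma>\<delta>/16\<close>. If a selected top arm is above m t, then so are all unselected arms of the bottom
group, at least \<open>|S|/15\<close> of them. Markov's inequality for the number of such failures bounds
the probability of \<open>\<gamma>K\<close> failing top arms by \<open>\<delta>/16\<close>, and of \<open>|S|/15\<close> failing bottom arms
by \<open>15\<gamma>\<delta>/16\<close>.\<close>

subsection \<open>Selecting the lowest elements of a list\<close>

definition less_rel :: "'a set \<Rightarrow> ('a \<Rightarrow> real) \<Rightarrow> ('a \<times> 'a) set" where
  "less_rel S e = {p \<in> S \<times> S. e (fst p) < e (snd p)}"

text \<open>The selection sees the values only through the relation R, which makes the event of a
good selection measurable.\<close>
definition select_lowest :: "'a list \<Rightarrow> nat \<Rightarrow> ('a \<times> 'a) set \<Rightarrow> 'a set" where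
  "select_lowest xs k R = set (take k (sort_key (\<lambda>a. card {b. (b, a) \<in> R}) xs))"

lemma less_rel_cong: "(\<And>a. a \<in> S \<Longrightarrow> e a = e' a) \<Longrightarrow> less_rel S e = less_rel S e'"
  unfolding less_rel_def by auto

lemma sorted_key_take_le:
  assumes "sorted (map f ys)" "distinct ys" "x \<in> set (take k ys)" "y \<in> set ys" "y \<notin> set (take k ys)"
  shows "f x \<le> f y"
proof -
  obtain i where i: "i < length ys" "i < k" "x = ys ! i"
    using assms(3) by (auto simp: in_set_conv_nth)
  obtain j where j: "j < length ys" "y = ys ! j"
    using assms(4) by (auto simp: in_set_conv_nth)
  have "\<not> j < k" using assms(5) j by (auto simp: in_set_conv_nth intro!: exI[of _ j])
  then show ?thesis using assms(1) i j by (auto simp: sorted_iff_nth_mono)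
qed

lemma select_lowest:
  fixes e :: "'a \<Rightarrow> real"
  assumes S: "finite S" and xs: "set xs = S" "distinct xs" and k: "k \<le> card S"
  defines "T \<equiv> select_lowest xs k (less_rel S e)"
  shows "T \<subseteq> S" "card T = k" "\<And>x y. x \<in> T \<Longrightarrow> y \<in> S - T \<Longrightarrow> e x \<le> e y"
proof -
  define key where "key = (\<lambda>a. card {b. (b, a) \<in> less_rel S e})"
  define ys where "ys = sort_key key xs"
  have ys: "set ys = S" "distinct ys" "sorted (map key ys)" "length ys = card S"
    using xs by (auto simp: ys_def distinct_card)
  have T: "T = set (take k ys)" unfolding T_def select_lowest_def ys_def key_def ..
  show "T \<subseteq> S" using ys T by (auto dest: in_set_takeD)
  show "card T = k" using ys T k by (simp add: distinct_card)
  fix x y assume x: "x \<in> T" and y: "y \<in> S - T"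
  have "key x \<le> key y" using sorted_key_take_le[OF ys(3) ys(2), of x k y] x y T ys by auto
  show "e x \<le> e y"
  proof (rule ccontr)
    assume "\<not> e x \<le> e y"
    then have "{b. (b, y) \<in> less_rel S e} \<subset> {b. (b, x) \<in> less_rel S e}"
      using y x \<open>T \<subseteq> S\<close> by (auto simp: less_rel_def)
    moreover have "finite {b. (b, x) \<in> less_rel S e}"
      by (rule finite_subset[OF _ S]) (auto simp: less_rel_def)
    ultimately have "key y < key x" unfolding key_def by (rule psubset_card_mono[rotated])
    then show False using \<open>key x \<le> key y\<close> by simp
  qed
qed

text \<open>If x were above t, all of \<open>B - T\<close> would be above t too.\<close>
lemma lowest_le_threshold:
  fixes e :: "'a \<Rightarrow> real"
  assumes T: "T \<subseteq> S" "card T = k" "finite S"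
    and ord: "\<And>x y. x \<in> T \<Longrightarrow> y \<in> S - T \<Longrightarrow> e x \<le> e y"
    and B: "B \<subseteq> S" and few: "real (card {b\<in>B. t < e b}) < real (card B) - real k"
    and x: "x \<in> T"
  shows "e x \<le> t"
proof (rule ccontr)
  assume "\<not> e x \<le> t"
  then have "B - T \<subseteq> {b\<in>B. t < e b}"
    using ord[OF x] B by force
  moreover have fB: "finite B" using B T(3) finite_subset by auto
  ultimately have "card (B - T) \<le> card {b\<in>B. t < e b}" by (intro card_mono) auto
  moreover have "card B \<le> card ((B - T) \<union> T)"
    using fB T(1,3) finite_subset by (intro card_mono) auto
  moreover have "card ((B - T) \<union> T) \<le> card (B - T) + card T" by (rule card_Un_le)
  ultimately show False using few T(2) by linarith
qed

subsection \<open>The uniform sampling policy\<close>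

definition arm_list :: "'a set \<Rightarrow> 'a list" where
  "arm_list S = (SOME xs. set xs = S \<and> distinct xs)"

definition empirical_sum :: "('a \<times> real) list \<Rightarrow> 'a \<Rightarrow> real" where
  "empirical_sum h a = sum_list (map snd (filter (\<lambda>p. fst p = a) h))"

definition uniform_policy :: "'a set \<Rightarrow> nat \<Rightarrow> 'a policy" where
  "uniform_policy S m h = (if length h < m * card S then Pull (arm_list S ! (length h div m))
     else Stop (select_lowest (arm_list S) (card S div 10) (less_rel S (empirical_sum h))))"

text \<open>The first k entries of the history of \<open>uniform_policy\<close>: the i-th pull is the
\<open>(i mod m)\<close>-th pull of the arm in position \<open>i div m\<close>.\<close>
definition block_history :: "'a list \<Rightarrow> nat \<Rightarrow> ('a \<times> nat \<Rightarrow> real) \<Rightarrow> nat \<Rightarrow> ('a \<times> real) list" where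
  "block_history xs m \<omega> k = map (\<lambda>i. (xs ! (i div m), \<omega> (xs ! (i div m), i mod m))) [0..<k]"

definition arm_sum :: "nat \<Rightarrow> 'a \<Rightarrow> ('a \<times> nat \<Rightarrow> real) \<Rightarrow> real" where
  "arm_sum m a \<omega> = (\<Sum>j<m. \<omega> (a, j))"

lemma arm_list: "finite S \<Longrightarrow> set (arm_list S) = S \<and> distinct (arm_list S)"
  unfolding arm_list_def by (rule someI_ex) (use finite_distinct_list in blast)

lemma div_eq_div_iff_ge:
  fixes i k m :: nat
  assumes "i < k" "0 < m"
  shows "i div m = k div m \<longleftrightarrow> k - k mod m \<le> i"
proof -
  have e: "k - k mod m = m * (k div m)" by (simp add: minus_mod_eq_mult_div)
  show ?thesis
  proof
    assume "i div m = k div m"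
    then show "k - k mod m \<le> i" using e by (metis div_times_less_eq_dividend mult.commute)
  next
    assume "k - k mod m \<le> i"
    then have "k div m \<le> i div m" using e assms(2) by (metis div_le_mono nonzero_mult_div_cancel_left not_gr0)
    moreover have "i div m \<le> k div m" using assms by (simp add: div_le_mono)
    ultimately show "i div m = k div m" by simp
  qed
qed

lemma filter_le_upt: "filter (\<lambda>i. c \<le> i) [0..<k] = [c..<(k::nat)]"
  by (induction k) auto

lemma block_history_count:
  assumes "distinct xs" "0 < m" "k < m * length xs"
  shows "length (filter (\<lambda>p. fst p = xs ! (k div m)) (block_history xs m \<omega> k)) = k mod m"
proof -
  have kd: "k div m < length xs" using assms by (simp add: div_less_iff_less_mult mult.commute)
  have "filter (\<lambda>i. xs ! (i div m) = xs ! (k div m)) [0..<k] = filter (\<lambda>i. k - k mod m \<le> i) [0..<k]"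
  proof (rule filter_cong[OF refl])
    fix i assume "i \<in> set [0..<k]"
    then have i: "i < k" by simp
    then have "i div m < length xs" using kd div_le_mono[of i k m] by simp
    then show "(xs ! (i div m) = xs ! (k div m)) = (k - k mod m \<le> i)"
      using kd assms div_eq_div_iff_ge[OF i assms(2)] by (simp add: nth_eq_iff_index_eq)
  qed
  then show ?thesis
    by (simp add: block_history_def filter_map o_def filter_le_upt)
qed

lemma block_indices:
  fixes m p n :: nat
  assumes "0 < m" "p < n"
  shows "{i. i < m * n \<and> i div m = p} = {p * m..<p * m + m}"
proof (intro set_eqI iffI)
  fix i assume "i \<in> {i. i < m * n \<and> i div m = p}"
  then have "i div m = p" by simp
  then show "i \<in> {p * m..<p * m + m}"
    using div_times_less_eq_dividend[of i m] dividend_less_div_times[OF assms(1), of i] by simp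
next
  fix i assume i: "i \<in> {p * m..<p * m + m}"
  have "p * m + m \<le> m * n"
    using mult_le_mono1[of "Suc p" n m] assms(2) by (simp add: mult.commute)
  moreover have "i div m = p" using i by (intro div_nat_eqI) (simp_all add: mult.commute)
  ultimately show "i \<in> {i. i < m * n \<and> i div m = p}" using i by simp
qed

lemma empirical_sum_block_history:
  assumes "distinct xs" "0 < m" "p < length xs"
  shows "empirical_sum (block_history xs m \<omega> (m * length xs)) (xs ! p) = arm_sum m (xs ! p) \<omega>"
proof -
  let ?N = "m * length xs" and ?f = "\<lambda>i. \<omega> (xs ! (i div m), i mod m)"
  have "filter (\<lambda>i. xs ! (i div m) = xs ! p) [0..<?N] = filter (\<lambda>i. i div m = p) [0..<?N]"
  proof (rule filter_cong[OF refl])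
    fix i assume "i \<in> set [0..<?N]"
    then have "i div m < length xs" using assms by (simp add: div_less_iff_less_mult mult.commute)
    then show "(xs ! (i div m) = xs ! p) = (i div m = p)"
      using assms by (simp add: nth_eq_iff_index_eq)
  qed
  then have "empirical_sum (block_history xs m \<omega> ?N) (xs ! p) = sum_list (map ?f (filter (\<lambda>i. i div m = p) [0..<?N]))"
    by (simp add: empirical_sum_def block_history_def filter_map o_def)
  also have "\<dots> = (\<Sum>i\<in>{i. i < ?N \<and> i div m = p}. ?f i)"
    by (subst sum_list_distinct_conv_sum_set) (auto intro!: sum.cong)
  also have "\<dots> = (\<Sum>j\<in>{0..<m}. ?f (p * m + j))"
    unfolding block_indices[OF assms(2,3)] by (subst sum.atLeastLessThan_shift_0) (simp add: o_def)
  also have "\<dots> = arm_sum m (xs ! p) \<omega>"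
    using assms(2) by (auto intro!: sum.cong simp: atLeast0LessThan arm_sum_def)
  finally show ?thesis .
qed

lemma run_uniform_policy_block_history:
  assumes S: "finite S" and m: "0 < m"
  shows "k \<le> m * card S \<Longrightarrow> m * card S - k \<le> d \<Longrightarrow>
    run (uniform_policy S m) \<omega> d (block_history (arm_list S) m \<omega> k)
    = Some (select_lowest (arm_list S) (card S div 10)
        (less_rel S (empirical_sum (block_history (arm_list S) m \<omega> (m * card S)))))"
proof (induction "m * card S - k" arbitrary: k d)
  case 0
  then have "k = m * card S" by simp
  then show ?case by (subst run.simps) (simp add: uniform_policy_def block_history_def)
next
  case (Suc r)
  define xs where "xs = arm_list S"
  have xs: "distinct xs" "length xs = card S"
    using arm_list[OF S] distinct_card unfolding xs_def by metis+
  have k: "k < m * card S" using Suc by simp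
  obtain d' where d: "d = Suc d'" using Suc by (cases d) auto
  have step: "block_history xs m \<omega> k @ [(xs ! (k div m), \<omega> (xs ! (k div m), k mod m))]
      = block_history xs m \<omega> (Suc k)"
    by (simp add: block_history_def)
  have "uniform_policy S m (block_history xs m \<omega> k) = Pull (xs ! (k div m))"
    using k unfolding uniform_policy_def xs_def by (simp add: block_history_def)
  then have "run (uniform_policy S m) \<omega> d (block_history xs m \<omega> k)
      = run (uniform_policy S m) \<omega> d' (block_history xs m \<omega> (Suc k))"
    using block_history_count[OF xs(1) m, of k \<omega>] k xs(2) step by (subst run.simps) (simp add: d)
  then show ?case using Suc.hyps Suc.prems d unfolding xs_def by simp
qed

lemma run_uniform_policy:
  assumes "finite S" "0 < m" "m * card S \<le> N"
  shows "run (uniform_policy S m) \<omega> N []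
    = Some (select_lowest (arm_list S) (card S div 10) (less_rel S (\<lambda>a. arm_sum m a \<omega>)))"
proof -
  define xs where "xs = arm_list S"
  have xs: "set xs = S" "distinct xs" "length xs = card S"
    using arm_list[OF assms(1)] distinct_card unfolding xs_def by metis+
  have "less_rel S (empirical_sum (block_history xs m \<omega> (m * card S))) = less_rel S (\<lambda>a. arm_sum m a \<omega>)"
  proof (rule less_rel_cong)
    fix a assume "a \<in> S"
    then obtain i where "i < length xs" "a = xs ! i" using xs(1) by (auto simp: in_set_conv_nth)
    then show "empirical_sum (block_history xs m \<omega> (m * card S)) a = arm_sum m a \<omega>"
      using empirical_sum_block_history[OF xs(2) assms(2)] xs(3) by metis
  qed
  moreover have "block_history xs m \<omega> 0 = []" by (simp add: block_history_def)
  ultimately show ?thesis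
    using run_uniform_policy_block_history[OF assms(1,2), of 0 N \<omega>] assms(3) unfolding xs_def by simp
qed

subsection \<open>Reward sums\<close>

lemma prob_space_reward_space: "valid_arms S D \<Longrightarrow> prob_space (reward_space S D)"
  unfolding reward_space_def valid_arms_def by (rule prob_space_PiM) auto

lemma reward_space_component:
  assumes "valid_arms S D" "a \<in> S"
  shows "(\<lambda>\<omega>. \<omega> (a, j)) \<in> measurable (reward_space S D) (D a)"
    and "distr (reward_space S D) (D a) (\<lambda>\<omega>. \<omega> (a, j)) = D a"
proof -
  have aj: "(a, j) \<in> S \<times> UNIV" using assms(2) by simp
  show "(\<lambda>\<omega>. \<omega> (a, j)) \<in> measurable (reward_space S D) (D a)"
    using measurable_component_singleton[OF aj, of "\<lambda>(a, j). D a"] by (simp add: reward_space_def)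
  have "distr (PiM (S \<times> UNIV) (\<lambda>(a, j). D a)) ((\<lambda>(a, j). D a) (a, j)) (\<lambda>\<omega>. \<omega> (a, j))
      = (\<lambda>(a, j). D a) (a, j)"
    using assms(1) by (intro distr_PiM_component[OF _ aj]) (auto simp: valid_arms_def)
  then show "distr (reward_space S D) (D a) (\<lambda>\<omega>. \<omega> (a, j)) = D a"
    by (simp add: reward_space_def)
qed

lemma borel_measurable_reward:
  assumes "valid_arms S D" "a \<in> S"
  shows "(\<lambda>\<omega>. \<omega> (a, j)) \<in> borel_measurable (reward_space S D)"
proof -
  have "sets (D a) = sets borel" using assms by (simp add: valid_arms_def)
  then show ?thesis using reward_space_component(1)[OF assms] measurable_cong_sets[OF refl] by blast
qed

lemma borel_measurable_arm_sum:
  "valid_arms S D \<Longrightarrow> a \<in> S \<Longrightarrow> arm_sum m a \<in> borel_measurable (reward_space S D)"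
  unfolding arm_sum_def by (intro borel_measurable_sum borel_measurable_reward)

lemma indep_vars_rewards:
  assumes V: "valid_arms S D" and a: "a \<in> S" and J: "J \<noteq> {}"
  shows "prob_space.indep_vars (reward_space S D) (\<lambda>_. borel) (\<lambda>j \<omega>. \<omega> (a, j)) J"
proof -
  interpret prob_space "reward_space S D" using V by (rule prob_space_reward_space)
  define M where "M = (\<lambda>(b::'a, j::nat). D b)"
  have Da: "sets (D a) = sets borel" using V a by (simp add: valid_arms_def)
  have "distr (reward_space S D) (PiM J (\<lambda>_. borel)) (\<lambda>\<omega>. \<lambda>j\<in>J. \<omega> (a, j))
      = distr (reward_space S D) (PiM J (\<lambda>j. M (a, j))) (\<lambda>\<omega>. \<lambda>j\<in>J. \<omega> (a, j))"
    using Da by (intro distr_cong) (auto simp: M_def intro!: sets_PiM_cong)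
  also have "\<dots> = PiM J (\<lambda>j. M (a, j))"
    unfolding reward_space_def M_def[symmetric] using V a
    by (intro distr_PiM_reindex) (auto simp: inj_on_def valid_arms_def M_def)
  also have "\<dots> = PiM J (\<lambda>j. distr (reward_space S D) borel (\<lambda>\<omega>. \<omega> (a, j)))"
  proof (rule PiM_cong)
    fix j
    have "distr (reward_space S D) borel (\<lambda>\<omega>. \<omega> (a, j)) = distr (reward_space S D) (D a) (\<lambda>\<omega>. \<omega> (a, j))"
      using Da by (intro distr_cong) auto
    then show "M (a, j) = distr (reward_space S D) borel (\<lambda>\<omega>. \<omega> (a, j))"
      using reward_space_component(2)[OF V a] by (simp add: M_def)
  qed simp
  finally show ?thesis
    using borel_measurable_reward[OF V a] by (subst indep_vars_iff_distr_eq_PiM[OF J]) auto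
qed

lemma
  assumes V: "valid_arms S D" and a: "a \<in> S"
  shows AE_reward_unit: "AE \<omega> in reward_space S D. \<omega> (a, j) \<in> {0..1}"
    and expectation_reward: "(\<integral>\<omega>. \<omega> (a, j) \<partial>reward_space S D) = arm_mean (D a)"
proof -
  interpret Da: prob_space "D a" using V a by (simp add: valid_arms_def)
  have "AE x in D a. x \<in> {0..1}" using V a by (intro Da.AE_prob_1) (simp add: valid_arms_def)
  then have "AE x in distr (reward_space S D) (D a) (\<lambda>\<omega>. \<omega> (a, j)). x \<in> {0..1}"
    by (subst reward_space_component(2)[OF V a])
  then show "AE \<omega> in reward_space S D. \<omega> (a, j) \<in> {0..1}"
    by (rule AE_distrD[OF reward_space_component(1)[OF V a]])
  have "arm_mean (D a) = (\<integral>x. x \<partial>distr (reward_space S D) (D a) (\<lambda>\<omega>. \<omega> (a, j)))"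
    by (simp add: reward_space_component(2)[OF V a] arm_mean_def)
  also have "\<dots> = (\<integral>\<omega>. \<omega> (a, j) \<partial>reward_space S D)"
    using V a by (intro integral_distr reward_space_component(1)[OF V a] measurable_ident_sets)
      (simp add: valid_arms_def)
  finally show "(\<integral>\<omega>. \<omega> (a, j) \<partial>reward_space S D) = arm_mean (D a)" ..
qed

lemma arm_sum_hoeffding:
  assumes V: "valid_arms S D" and a: "a \<in> S" and m: "0 < m" and \<epsilon>: "0 \<le> \<epsilon>"
  shows "t \<le> real m * arm_mean (D a) - \<epsilon> \<Longrightarrow>
      measure (reward_space S D) {\<omega>\<in>space (reward_space S D). arm_sum m a \<omega> \<le> t} \<le> exp (-2 * \<epsilon>\<^sup>2 / real m)"
    and "real m * arm_mean (D a) + \<epsilon> \<le> t \<Longrightarrow>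
      measure (reward_space S D) {\<omega>\<in>space (reward_space S D). t < arm_sum m a \<omega>} \<le> exp (-2 * \<epsilon>\<^sup>2 / real m)"
proof -
  let ?\<Omega> = "reward_space S D"
  interpret prob_space ?\<Omega> using V by (rule prob_space_reward_space)
  interpret H: Hoeffding_ineq ?\<Omega> "{..<m}" "\<lambda>j \<omega>. \<omega> (a, j)" "\<lambda>_. 0" "\<lambda>_. 1" "real m * arm_mean (D a)"
  proof unfold_locales
    show "indep_vars (\<lambda>_. borel) (\<lambda>j \<omega>. \<omega> (a, j)) {..<m}"
      using m by (intro indep_vars_rewards[OF V a]) auto
    show "AE \<omega> in ?\<Omega>. \<omega> (a, j) \<in> {0..1}" for j by (rule AE_reward_unit[OF V a])
    show "real m * arm_mean (D a) \<equiv> \<Sum>j<m. expectation (\<lambda>\<omega>. \<omega> (a, j))"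
      by (simp add: expectation_reward[OF V a])
  qed simp
  have var: "(\<Sum>i<m. ((1::real) - 0)\<^sup>2) = real m" by simp
  have le_event: "{\<omega>\<in>space ?\<Omega>. arm_sum m a \<omega> \<le> c} \<in> events"
    and ge_event: "{\<omega>\<in>space ?\<Omega>. c \<le> arm_sum m a \<omega>} \<in> events" for c
    using borel_measurable_arm_sum[OF V a] by (auto intro: borel_measurable_le)
  show "measure ?\<Omega> {\<omega>\<in>space ?\<Omega>. arm_sum m a \<omega> \<le> t} \<le> exp (-2 * \<epsilon>\<^sup>2 / real m)"
    if "t \<le> real m * arm_mean (D a) - \<epsilon>"
  proof -
    have "prob {\<omega>\<in>space ?\<Omega>. arm_sum m a \<omega> \<le> t}
        \<le> prob {\<omega>\<in>space ?\<Omega>. arm_sum m a \<omega> \<le> real m * arm_mean (D a) - \<epsilon>}"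
      using that by (intro finite_measure_mono le_event) auto
    then show ?thesis using H.Hoeffding_ineq_le[OF \<epsilon>] m unfolding var arm_sum_def by simp
  qed
  show "measure ?\<Omega> {\<omega>\<in>space ?\<Omega>. t < arm_sum m a \<omega>} \<le> exp (-2 * \<epsilon>\<^sup>2 / real m)"
    if "real m * arm_mean (D a) + \<epsilon> \<le> t"
  proof -
    have "prob {\<omega>\<in>space ?\<Omega>. t < arm_sum m a \<omega>}
        \<le> prob {\<omega>\<in>space ?\<Omega>. real m * arm_mean (D a) + \<epsilon> \<le> arm_sum m a \<omega>}"
      using that by (intro finite_measure_mono ge_event) auto
    then show ?thesis using H.Hoeffding_ineq_ge[OF \<epsilon>] m unfolding var arm_sum_def by simp
  qed
qed

lemma arm_sum_threshold:
  assumes V: "valid_arms S D" and a: "a \<in> S" and m: "0 < m" and \<phi>: "0 \<le> \<phi>"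
  shows "\<theta> \<le> arm_mean (D a) \<Longrightarrow>
      measure (reward_space S D) {\<omega>\<in>space (reward_space S D). arm_sum m a \<omega> \<le> real m * (\<theta> - \<phi> / 2)}
        \<le> exp (-2 * (real m * \<phi> / 2)\<^sup>2 / real m)"
    and "arm_mean (D a) \<le> \<theta> - \<phi> \<Longrightarrow>
      measure (reward_space S D) {\<omega>\<in>space (reward_space S D). real m * (\<theta> - \<phi> / 2) < arm_sum m a \<omega>}
        \<le> exp (-2 * (real m * \<phi> / 2)\<^sup>2 / real m)"
proof -
  have \<epsilon>: "0 \<le> real m * \<phi> / 2" using \<phi> by simp
  show "measure (reward_space S D) {\<omega>\<in>space (reward_space S D). arm_sum m a \<omega> \<le> real m * (\<theta> - \<phi> / 2)}
      \<le> exp (-2 * (real m * \<phi> / 2)\<^sup>2 / real m)" if "\<theta> \<le> arm_mean (D a)"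
    using that mult_left_mono[of \<theta> "arm_mean (D a)" "real m"]
    by (intro arm_sum_hoeffding(1)[OF V a m \<epsilon>]) (simp add: algebra_simps)
  show "measure (reward_space S D) {\<omega>\<in>space (reward_space S D). real m * (\<theta> - \<phi> / 2) < arm_sum m a \<omega>}
      \<le> exp (-2 * (real m * \<phi> / 2)\<^sup>2 / real m)" if "arm_mean (D a) \<le> \<theta> - \<phi>"
    using that mult_left_mono[of "arm_mean (D a)" "\<theta> - \<phi>" "real m"]
    by (intro arm_sum_hoeffding(2)[OF V a m \<epsilon>]) (simp add: algebra_simps)
qed

subsection \<open>Probability of a good selection\<close>

lemma sets_Collect_finite_subset_pred:
  assumes I: "finite I" and Q: "\<And>i. i \<in> I \<Longrightarrow> {\<omega>\<in>space M. Q i \<omega>} \<in> sets M"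
  shows "{\<omega>\<in>space M. P {i\<in>I. Q i \<omega>}} \<in> sets M"
proof -
  have eq: "{\<omega>\<in>space M. P {i\<in>I. Q i \<omega>}} =
    {\<omega>\<in>space M. \<exists>B\<in>{B. B \<subseteq> I \<and> P B}. \<forall>i\<in>I. Q i \<omega> \<longleftrightarrow> i \<in> B}"
  proof (intro set_eqI iffI)
    fix \<omega> assume "\<omega> \<in> {\<omega>\<in>space M. P {i\<in>I. Q i \<omega>}}"
    then show "\<omega> \<in> {\<omega>\<in>space M. \<exists>B\<in>{B. B \<subseteq> I \<and> P B}. \<forall>i\<in>I. Q i \<omega> \<longleftrightarrow> i \<in> B}"
      by (intro CollectI conjI bexI[of _ "{i\<in>I. Q i \<omega>}"]) auto
  next
    fix \<omega> assume "\<omega> \<in> {\<omega>\<in>space M. \<exists>B\<in>{B. B \<subseteq> I \<and> P B}. \<forall>i\<in>I. Q i \<omega> \<longleftrightarrow> i \<in> B}"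
    then obtain B where B: "\<omega> \<in> space M" "B \<subseteq> I" "P B" "\<forall>i\<in>I. Q i \<omega> \<longleftrightarrow> i \<in> B" by auto
    then have "{i\<in>I. Q i \<omega>} = B" by auto
    then show "\<omega> \<in> {\<omega>\<in>space M. P {i\<in>I. Q i \<omega>}}" using B by auto
  qed
  have "{\<omega>\<in>space M. \<forall>i\<in>I. Q i \<omega> \<longleftrightarrow> i \<in> B} \<in> sets M" for B
  proof (rule sets.sets_Collect_finite_All[OF _ I])
    fix i assume i: "i \<in> I"
    show "{\<omega>\<in>space M. Q i \<omega> \<longleftrightarrow> i \<in> B} \<in> sets M"
    proof (cases "i \<in> B")
      case False
      then have "{\<omega>\<in>space M. Q i \<omega> \<longleftrightarrow> i \<in> B} = space M - {\<omega>\<in>space M. Q i \<omega>}" by auto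
      then show ?thesis using Q[OF i] by auto
    qed (use Q[OF i] in simp)
  qed
  moreover have "finite {B. B \<subseteq> I \<and> P B}" using I by simp
  ultimately show ?thesis unfolding eq by (intro sets.sets_Collect_finite_Ex) auto
qed

lemma (in prob_space) prob_card_ge_le:
  assumes A: "finite A" and ev: "\<And>a. a \<in> A \<Longrightarrow> {\<omega>\<in>space M. Q a \<omega>} \<in> events"
    and pr: "\<And>a. a \<in> A \<Longrightarrow> prob {\<omega>\<in>space M. Q a \<omega>} \<le> p" and c: "0 < c"
  shows "prob {\<omega>\<in>space M. c \<le> real (card {a\<in>A. Q a \<omega>})} \<le> real (card A) * p / c"
proof -
  define u where "u = (\<lambda>\<omega>. \<Sum>a\<in>A. indicator {\<omega>\<in>space M. Q a \<omega>} \<omega> :: real)"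
  have card_eq: "real (card {a\<in>A. Q a \<omega>}) = u \<omega>" if "\<omega> \<in> space M" for \<omega>
  proof -
    have "u \<omega> = (\<Sum>a\<in>A. if Q a \<omega> then 1 else 0)"
      unfolding u_def using that by (intro sum.cong) (auto simp: indicator_def)
    also have "\<dots> = real (card {a\<in>A. Q a \<omega>})"
      using A by (simp add: sum.If_cases Int_def conj_commute)
    finally show ?thesis ..
  qed
  have ind: "integrable M (indicator {\<omega>\<in>space M. Q a \<omega>} :: _ \<Rightarrow> real)" if "a \<in> A" for a
    by (rule integrable_real_indicator) (auto simp: ev that less_top[symmetric])
  have "integral\<^sup>L M u = (\<Sum>a\<in>A. prob {\<omega>\<in>space M. Q a \<omega>})"
    unfolding u_def by (subst Bochner_Integration.integral_sum) (auto intro!: ind simp: ev)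
  also have "\<dots> \<le> real (card A) * p" using sum_mono[of A _ "\<lambda>_. p"] pr by simp
  finally have I: "integral\<^sup>L M u \<le> real (card A) * p" .
  have "{\<omega>\<in>space M. c \<le> real (card {a\<in>A. Q a \<omega>})} = {\<omega>\<in>space M. c \<le> u \<omega>}"
    using card_eq by auto
  also have "prob \<dots> \<le> integral\<^sup>L M u / c"
    using ind c unfolding u_def
    by (intro integral_Markov_inequality_measure[OF _ sets.top])
      (auto intro!: Bochner_Integration.integrable_sum sum_nonneg)
  also have "\<dots> \<le> real (card A) * p / c" using I c by (simp add: divide_right_mono)
  finally show ?thesis .
qed

lemma (in prob_space) prob_select_lowest_ge:
  fixes Z :: "'i \<Rightarrow> 'a \<Rightarrow> real" and S :: "'i set"
  assumes S: "finite S" "set xs = S" "distinct xs" and Top: "Top \<subseteq> S" and B: "B \<subseteq> S"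
    and k: "k < card B" and c: "0 < c"
    and Z: "\<And>a. a \<in> S \<Longrightarrow> Z a \<in> borel_measurable M"
    and top: "\<And>a. a \<in> Top \<Longrightarrow> prob {\<omega>\<in>space M. Z a \<omega> \<le> t} \<le> p"
    and bottom: "\<And>b. b \<in> B \<Longrightarrow> prob {\<omega>\<in>space M. t < Z b \<omega>} \<le> p"
  shows "1 - real (card Top) * p / c - real (card B) * p / (real (card B) - real k)
    \<le> prob {\<omega>\<in>space M. real (card (select_lowest xs k (less_rel S (\<lambda>a. Z a \<omega>)) \<inter> Top)) \<le> c}"
proof -
  define E1 where "E1 = {\<omega>\<in>space M. c \<le> real (card {a\<in>Top. Z a \<omega> \<le> t})}"
  define E2 where "E2 = {\<omega>\<in>space M. real (card B) - real k \<le> real (card {b\<in>B. t < Z b \<omega>})}"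
  define G where "G = {\<omega>\<in>space M. real (card (select_lowest xs k (less_rel S (\<lambda>a. Z a \<omega>)) \<inter> Top)) \<le> c}"
  have fin: "finite Top" "finite B" using Top B S(1) finite_subset by auto
  have le_ev: "{\<omega>\<in>space M. Z a \<omega> \<le> t} \<in> events" and less_ev: "{\<omega>\<in>space M. t < Z a \<omega>} \<in> events"
    if "a \<in> S" for a
    using Z[OF that] by (auto intro: borel_measurable_le borel_measurable_less)
  have E1: "E1 \<in> events" "prob E1 \<le> real (card Top) * p / c"
    unfolding E1_def using fin(1) Top le_ev top c
    by (auto intro!: sets_Collect_finite_subset_pred prob_card_ge_le)
  have "0 < real (card B) - real k" using k by simp
  then have E2: "E2 \<in> events" "prob E2 \<le> real (card B) * p / (real (card B) - real k)"
    unfolding E2_def using fin(2) B less_ev bottom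
    by (auto intro!: sets_Collect_finite_subset_pred prob_card_ge_le)
  have "G = {\<omega>\<in>space M. (\<lambda>R. real (card (select_lowest xs k R \<inter> Top)) \<le> c)
      {q\<in>S \<times> S. Z (fst q) \<omega> < Z (snd q) \<omega>}}"
    unfolding G_def less_rel_def ..
  then have G: "G \<in> events"
    using S(1) Z by (auto intro!: sets_Collect_finite_subset_pred borel_measurable_less)
  have "space M - (E1 \<union> E2) \<subseteq> G"
  proof
    fix \<omega> assume \<omega>: "\<omega> \<in> space M - (E1 \<union> E2)"
    define T where "T = select_lowest xs k (less_rel S (\<lambda>a. Z a \<omega>))"
    have "k \<le> card S" using k card_mono[OF S(1) B] by simp
    note T = select_lowest[OF S this, where e = "\<lambda>a. Z a \<omega>", folded T_def]
    have "T \<inter> Top \<subseteq> {a\<in>Top. Z a \<omega> \<le> t}"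
      using \<omega> lowest_le_threshold[OF T(1,2) S(1) T(3) B] unfolding E2_def by fastforce
    then have "card (T \<inter> Top) \<le> card {a\<in>Top. Z a \<omega> \<le> t}" using fin by (intro card_mono) auto
    then show "\<omega> \<in> G" using \<omega> unfolding E1_def G_def T_def by auto
  qed
  then have "prob (space M - (E1 \<union> E2)) \<le> prob G" using G by (rule finite_measure_mono)
  moreover have "prob (space M - (E1 \<union> E2)) = 1 - prob (E1 \<union> E2)"
    using E1(1) E2(1) by (intro prob_compl) auto
  moreover have "prob (E1 \<union> E2) \<le> prob E1 + prob E2" using E1(1) E2(1) by (rule measure_Un_le)
  ultimately show ?thesis using E1(2) E2(2) unfolding G_def by linarith
qed

definition sample_size :: "real \<Rightarrow> real \<Rightarrow> real \<Rightarrow> nat" where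
  "sample_size \<gamma> \<delta> \<phi> = nat \<lceil>2 * ln (16 / (\<gamma> * \<delta>)) / \<phi>\<^sup>2\<rceil>"

lemma
  fixes \<gamma> \<delta> \<phi> :: real
  assumes "0 < \<gamma>" "\<gamma> \<le> 1" "0 < \<delta>" "\<delta> \<le> 1" "0 < \<phi>"
  shows sample_size_pos: "0 < sample_size \<gamma> \<delta> \<phi>"
    and exp_sample_size_le:
      "exp (-2 * (real (sample_size \<gamma> \<delta> \<phi>) * \<phi> / 2)\<^sup>2 / real (sample_size \<gamma> \<delta> \<phi>)) \<le> \<gamma> * \<delta> / 16"
proof -
  let ?m = "sample_size \<gamma> \<delta> \<phi>"
  have gd: "0 < \<gamma> * \<delta>" "\<gamma> * \<delta> \<le> 1" using assms by (auto simp: mult_le_one)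
  have pos: "0 < 2 * ln (16 / (\<gamma> * \<delta>)) / \<phi>\<^sup>2" using gd assms(5) by simp
  have m_ge: "2 * ln (16 / (\<gamma> * \<delta>)) / \<phi>\<^sup>2 \<le> real ?m" unfolding sample_size_def by linarith
  then show m_pos: "0 < ?m" using pos by linarith
  have "-2 * (real ?m * \<phi> / 2)\<^sup>2 / real ?m = - (real ?m * \<phi>\<^sup>2 / 2)"
    using m_pos by (simp add: power2_eq_square field_simps)
  also have "\<dots> \<le> - ln (16 / (\<gamma> * \<delta>))"
    using m_ge assms(5) by (simp add: field_simps)
  finally have "exp (-2 * (real ?m * \<phi> / 2)\<^sup>2 / real ?m) \<le> exp (- ln (16 / (\<gamma> * \<delta>)))" by simp
  also have "\<dots> = \<gamma> * \<delta> / 16" using gd by (simp add: exp_minus)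
  finally show "exp (-2 * (real ?m * \<phi> / 2)\<^sup>2 / real ?m) \<le> \<gamma> * \<delta> / 16" .
qed

text \<open>Since \<open>\<gamma>, \<delta> \<le> 1/2\<close>, the constant \<open>ln 16\<close> and the rounding are absorbed into
\<open>ln (1/\<gamma>) + ln (1/\<delta>) \<ge> 2 ln 2\<close>.\<close>
lemma sample_size_budget:
  fixes \<gamma> \<delta> \<phi> :: real
  assumes g: "0 < \<gamma>" "\<gamma> \<le> 1/2" and d: "0 < \<delta>" "\<delta> \<le> 1/2" and p: "0 < \<phi>" "\<phi> \<le> 1"
  shows "real (sample_size \<gamma> \<delta> \<phi>) * real n \<le> 7 * real n / \<phi>\<^sup>2 * (ln (1/\<gamma>) + ln (1/\<delta>))"
proof -
  define L where "L = ln (1/\<gamma>) + ln (1/\<delta>)"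
  have ln16: "ln (16 / (\<gamma> * \<delta>)) = 4 * ln 2 + L"
    using g d ln_realpow[of 2 4] by (simp add: L_def ln_div ln_mult)
  have "ln (2::real) \<le> ln (1/\<gamma>)" "ln (2::real) \<le> ln (1/\<delta>)"
    using g d by (auto intro!: ln_mono simp: field_simps)
  then have L: "2 * ln 2 \<le> L" unfolding L_def by simp
  have ln2: "2/3 \<le> ln (2::real)" by (rule ln2_ge_two_thirds)
  have phi2: "0 < \<phi>\<^sup>2" "\<phi>\<^sup>2 \<le> 1" using p by (auto simp: power_le_one)
  have "0 \<le> 2 * ln (16 / (\<gamma> * \<delta>)) / \<phi>\<^sup>2" using ln16 L ln2 phi2 by simp
  then have "real (sample_size \<gamma> \<delta> \<phi>) \<le> 2 * ln (16 / (\<gamma> * \<delta>)) / \<phi>\<^sup>2 + 1"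
    unfolding sample_size_def by linarith
  also have "\<dots> \<le> (2 * (4 * ln 2 + L) + 1) / \<phi>\<^sup>2"
    using phi2 unfolding ln16 by (simp add: add_divide_distrib le_divide_eq)
  also have "\<dots> \<le> 7 * L / \<phi>\<^sup>2"
    using phi2 L ln2 by (intro divide_right_mono) auto
  finally have "real (sample_size \<gamma> \<delta> \<phi>) * real n \<le> 7 * L / \<phi>\<^sup>2 * real n"
    by (rule mult_right_mono) simp
  then show ?thesis by (simp add: L_def algebra_simps)
qed

subsection \<open>Correctness of the uniform policy\<close>

lemma sorted_indexing_image:
  assumes "sorted_indexing S D \<sigma>" "1 \<le> i" "j \<le> card S"
  shows "\<sigma> ` {i..j} \<subseteq> S" "card (\<sigma> ` {i..j}) = Suc j - i"
proof -
  have "bij_betw \<sigma> {1..card S} S" and sub: "{i..j} \<subseteq> {1..card S}"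
    using assms by (auto simp: sorted_indexing_def)
  then show "\<sigma> ` {i..j} \<subseteq> S" "card (\<sigma> ` {i..j}) = Suc j - i"
    by (auto simp: bij_betw_def card_image inj_on_subset)
qed

lemma sorted_indexing_mean_bounds:
  assumes "sorted_indexing S D \<sigma>" "1 \<le> i" "j \<le> card S" "a \<in> \<sigma> ` {i..j}"
  shows "arm_mean (D (\<sigma> j)) \<le> arm_mean (D a)" "arm_mean (D a) \<le> arm_mean (D (\<sigma> i))"
  using assms by (auto simp: sorted_indexing_def)

text \<open>With \<open>K \<le> 2n/3\<close> the arms of rank at least \<open>(n + K)/2\<close> number at least \<open>n/6\<close>, so
removing \<open>n/10\<close> of them leaves at least a fifteenth.\<close>
lemma bottom_group_large:
  fixes n K :: nat
  assumes "real K \<le> 2/3 * real n"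
  defines "b \<equiv> Suc n - (n + K) div 2"
  shows "n div 10 < b" and "real b \<le> 15 * (real b - real (n div 10))"
proof -
  have "real b = real n + 1 - real ((n + K) div 2)" using assms by (simp add: b_def of_nat_diff)
  moreover have "6 * real ((n + K) div 2) \<le> 5 * real n" using assms by linarith
  moreover have "real (n div 10) \<le> real n / 10" using of_nat_div_le_of_nat[of n 10] by simp
  moreover have "0 \<le> real n" by simp
  ultimately have "real (n div 10) < real b" and "real b \<le> 15 * (real b - real (n div 10))"
    by argo+
  then show "n div 10 < b" and "real b \<le> 15 * (real b - real (n div 10))" by simp_all
qed

lemma failure_probability_le:
  fixes \<gamma> \<delta> p :: real and K b k :: nat
  assumes "0 < \<gamma>" "\<gamma> \<le> 1/2" "0 < \<delta>" "0 \<le> p" "p \<le> \<gamma> * \<delta> / 16" "1 \<le> K"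
    and "k < b" "real b \<le> 15 * (real b - real k)"
  shows "1 - \<delta> \<le> 1 - real K * p / (\<gamma> * real K) - real b * p / (real b - real k)"
proof -
  have "real b * p \<le> 15 * (real b - real k) * p" using assms(4,8) by (rule mult_right_mono[rotated])
  then have "real b * p / (real b - real k) \<le> 15 * p" using assms(7) by (simp add: divide_le_eq mult_ac)
  moreover have "real K * p / (\<gamma> * real K) \<le> \<delta> / 16"
    using assms(1,5,6) by (simp add: pos_divide_le_eq mult.commute)
  moreover have "\<gamma> * \<delta> \<le> \<delta> / 2" using assms(2,3) by simp
  ultimately show ?thesis using assms(3,5) by linarith
qed

lemma uniform_policy_success:
  fixes \<gamma> \<delta> \<phi> :: real
  assumes V: "valid_arms S D" and \<sigma>: "sorted_indexing S D \<sigma>"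
    and K: "1 \<le> K" "real K \<le> 2/3 * real (card S)"
    and g: "0 < \<gamma>" "\<gamma> \<le> 1/2" and d: "0 < \<delta>" "\<delta> \<le> 1/2" and p: "0 < \<phi>" "\<phi> \<le> 1"
    and gap: "\<phi> \<le> arm_mean (D (\<sigma> K)) - arm_mean (D (\<sigma> ((card S + K) div 2)))"
    and N: "sample_size \<gamma> \<delta> \<phi> * card S \<le> N"
  shows "1 - \<delta> \<le> measure (reward_space S D) {\<omega>\<in>space (reward_space S D).
    \<exists>T. run (uniform_policy S (sample_size \<gamma> \<delta> \<phi>)) \<omega> N [] = Some T \<and> T \<subseteq> S \<and>
      card T = card S div 10 \<and> real (card (T \<inter> \<sigma> ` {1..K})) \<le> \<gamma> * real K}"
proof -
  define n m mid where "n = card S" and "m = sample_size \<gamma> \<delta> \<phi>" and "mid = (n + K) div 2"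
  define Top B where "Top = \<sigma> ` {1..K}" and "B = \<sigma> ` {mid..n}"
  define \<theta> p where "\<theta> = arm_mean (D (\<sigma> K))" and "p = exp (-2 * (real m * \<phi> / 2)\<^sup>2 / real m)"
  interpret prob_space "reward_space S D" using V by (rule prob_space_reward_space)
  have S: "finite S" using V by (simp add: valid_arms_def)
  have m: "0 < m" and pb: "p \<le> \<gamma> * \<delta> / 16"
    using sample_size_pos[of \<gamma> \<delta> \<phi>] exp_sample_size_le[of \<gamma> \<delta> \<phi>] g d p
    unfolding m_def p_def by auto
  have mid: "K \<le> mid" "mid \<le> n" using K unfolding mid_def n_def by linarith+
  have Top: "Top \<subseteq> S" "card Top = K" and B: "B \<subseteq> S" "card B = Suc n - mid"
    using sorted_indexing_image[OF \<sigma>] K mid unfolding Top_def B_def n_def by auto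
  have top: "prob {\<omega>\<in>space (reward_space S D). arm_sum m a \<omega> \<le> real m * (\<theta> - \<phi> / 2)} \<le> p"
    if "a \<in> Top" for a
    using arm_sum_threshold(1)[OF V _ m] sorted_indexing_mean_bounds(1)[OF \<sigma> _ _ that[unfolded Top_def]]
      that Top(1) mid p unfolding \<theta>_def p_def n_def by auto
  have bottom: "prob {\<omega>\<in>space (reward_space S D). real m * (\<theta> - \<phi> / 2) < arm_sum m b \<omega>} \<le> p"
    if "b \<in> B" for b
    using arm_sum_threshold(2)[OF V _ m] sorted_indexing_mean_bounds(2)[OF \<sigma> _ _ that[unfolded B_def]]
      that B(1) mid K gap p unfolding \<theta>_def p_def n_def mid_def by fastforce
  have B_large: "n div 10 < card B" "real (card B) \<le> 15 * (real (card B) - real (n div 10))"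
    using bottom_group_large[OF K(2)] unfolding B(2) mid_def n_def by simp_all
  have "0 \<le> p" unfolding p_def by simp
  from failure_probability_le[OF g d(1) this pb K(1) B_large]
  have "1 - \<delta> \<le> 1 - real (card Top) * p / (\<gamma> * real K) - real (card B) * p / (real (card B) - real (n div 10))"
    unfolding Top(2) .
  also have "\<dots> \<le> prob {\<omega>\<in>space (reward_space S D).
      real (card (select_lowest (arm_list S) (n div 10) (less_rel S (\<lambda>a. arm_sum m a \<omega>)) \<inter> Top)) \<le> \<gamma> * real K}"
    using S arm_list[OF S] Top(1) B(1) B_large(1) K g top bottom borel_measurable_arm_sum[OF V]
    by (intro prob_select_lowest_ge) auto
  also have "\<dots> = measure (reward_space S D) {\<omega>\<in>space (reward_space S D).
    \<exists>T. run (uniform_policy S m) \<omega> N [] = Some T \<and> T \<subseteq> S \<and>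
      card T = card S div 10 \<and> real (card (T \<inter> \<sigma> ` {1..K})) \<le> \<gamma> * real K}"
    using run_uniform_policy[OF S m] N select_lowest(1,2)[OF S arm_list[OF S, THEN conjunct1]
        arm_list[OF S, THEN conjunct2], of "card S div 10"]
    unfolding n_def m_def Top_def by (simp add: mult.commute)
  finally show ?thesis unfolding m_def .
qed

theorem mainTheorem7:
  "\<exists>C::real. C > 0 \<and> (\<exists>alg :: 'a algorithm.
     \<forall>(S :: 'a set) (D :: 'a \<Rightarrow> real measure) (\<sigma> :: nat \<Rightarrow> 'a) (K :: nat) (\<gamma>::real) (\<delta>::real) (\<phi>::real).
       valid_arms S D \<longrightarrow> sorted_indexing S D \<sigma> \<longrightarrow>
       10 dvd card S \<longrightarrow> even (card S + K) \<longrightarrow>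
       1 \<le> K \<longrightarrow> real K \<le> 2/3 * real (card S) \<longrightarrow>
       0 < \<gamma> \<longrightarrow> \<gamma> \<le> 1/2 \<longrightarrow> 0 < \<delta> \<longrightarrow> \<delta> \<le> 1/2 \<longrightarrow> 0 < \<phi> \<longrightarrow> \<phi> \<le> 1 \<longrightarrow>
       arm_mean (D (\<sigma> K)) - arm_mean (D (\<sigma> ((card S + K) div 2))) \<ge> \<phi> \<longrightarrow>
       (let N = nat \<lfloor>C * real (card S) / \<phi>\<^sup>2 * (ln (1/\<gamma>) + ln (1/\<delta>))\<rfloor>;
            \<Omega> = reward_space S D
        in (\<forall>\<pi>\<in>set_pmf (alg S K \<gamma> \<delta> \<phi>). \<forall>\<omega>\<in>space \<Omega>. run \<pi> \<omega> N [] \<noteq> None) \<and>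
           measure_pmf.expectation (alg S K \<gamma> \<delta> \<phi>)
             (\<lambda>\<pi>. measure \<Omega> {\<omega>\<in>space \<Omega>. \<exists>T. run \<pi> \<omega> N [] = Some T \<and> T \<subseteq> S \<and>
                    card T = card S div 10 \<and>
                    real (card (T \<inter> \<sigma> ` {1..K})) \<le> \<gamma> * real K})
             \<ge> 1 - \<delta>))"
proof (intro exI[of _ 7] conjI exI[of _ "\<lambda>S K \<gamma> \<delta> \<phi>. return_pmf (uniform_policy S (sample_size \<gamma> \<delta> \<phi>))"]
    allI impI)
  fix S :: "'a set" and D \<sigma> K and \<gamma> \<delta> \<phi> :: real
  assume V: "valid_arms S D" and \<sigma>: "sorted_indexing S D \<sigma>" and K: "1 \<le> K" "real K \<le> 2/3 * real (card S)"
    and g: "0 < \<gamma>" "\<gamma> \<le> 1/2" and d: "0 < \<delta>" "\<delta> \<le> 1/2" and p: "0 < \<phi>" "\<phi> \<le> 1"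
    and gap: "arm_mean (D (\<sigma> K)) - arm_mean (D (\<sigma> ((card S + K) div 2))) \<ge> \<phi>"
  define N where "N = nat \<lfloor>7 * real (card S) / \<phi>\<^sup>2 * (ln (1/\<gamma>) + ln (1/\<delta>))\<rfloor>"
  have N: "sample_size \<gamma> \<delta> \<phi> * card S \<le> N"
    using sample_size_budget[OF g d p, of "card S"] unfolding N_def by (intro le_nat_floor) simp
  have "finite S" "0 < sample_size \<gamma> \<delta> \<phi>"
    using V sample_size_pos[of \<gamma> \<delta> \<phi>] g d p by (auto simp: valid_arms_def)
  then show "let N = nat \<lfloor>7 * real (card S) / \<phi>\<^sup>2 * (ln (1/\<gamma>) + ln (1/\<delta>))\<rfloor>; \<Omega> = reward_space S D
    in (\<forall>\<pi>\<in>set_pmf (return_pmf (uniform_policy S (sample_size \<gamma> \<delta> \<phi>))). \<forall>\<omega>\<in>space \<Omega>. run \<pi> \<omega> N [] \<noteq> None) \<and>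
       measure_pmf.expectation (return_pmf (uniform_policy S (sample_size \<gamma> \<delta> \<phi>)))
         (\<lambda>\<pi>. measure \<Omega> {\<omega>\<in>space \<Omega>. \<exists>T. run \<pi> \<omega> N [] = Some T \<and> T \<subseteq> S \<and>
                card T = card S div 10 \<and> real (card (T \<inter> \<sigma> ` {1..K})) \<le> \<gamma> * real K}) \<ge> 1 - \<delta>"
    using run_uniform_policy[OF _ _ N] uniform_policy_success[OF V \<sigma> K g d p gap N]
    unfolding N_def[symmetric] Let_def by simp
qed simp

end
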